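(* Let $C_n=(V,E)$ be the cycle graph on $n\ge 3$ vertices. Then two distinct vertices $\mathbf v(X),\mathbf v(Y)$ of $\mathrm{CUT}(C_n)$ are adjacent if and only if $|\delta(X\triangle Y)|=2$ (equivalently, the Hamming distance between $\mathbf v(X)$ and $\mathbf v(Y)$ is $2$). Moreover, the 1-skeleton of $\mathrm{CUT}(C_n)$ contains a clique of size $n=|E|$; hence $\omega(\mathrm{CUT}(C_n))\ge |E|$.
   Context: For an undirected graph $G=(V,E)$ and $S\subseteq V$, $\delta(S)\subseteq E$ denotes the set of edges with exactly one endpoint in $S$, and $\mathbf v(S)\in\{0,1\}^{E}$ is its incidence vector ($v(S)_e=1$ iff $e\in\delta(S)$). The cut polytope is $\mathrm{CUT}(G)=\operatorname{conv}\{\mathbf v(S):S\subseteq V\}\subset\mathbb R^{E}$. The 1-skeleton of a polytope is the graph whose vertices are the polytope's vertices and whose edges are its one-dimensional faces; $\omega$ denotes its clique number. $X\triangle Y$ denotes symmetric difference. *)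

theory Defs
  imports "HOL-Analysis.Analysis"
begin

definition cycle_vertices :: "nat \<Rightarrow> nat set" where
  "cycle_vertices n = {0..<n}"

definition cycle_edges :: "nat \<Rightarrow> nat set set" where
  "cycle_edges n = {{i, Suc i mod n} | i. i < n}"

definition delta :: "nat set set \<Rightarrow> nat set \<Rightarrow> nat set set" where
  "delta E S = {e \<in> E. card (e \<inter> S) = 1}"

text \<open>The space R^E is represented as real^'e, where ed :: 'e \<Rightarrow> nat set is a
  bijection from the index type onto the edge set E (a labelling of coordinates).\<close>
definition cut_vec :: "('e::finite \<Rightarrow> nat set) \<Rightarrow> nat set set \<Rightarrow> nat set \<Rightarrow> real ^ 'e" where
  "cut_vec ed E S = (\<chi> k. if ed k \<in> delta E S then 1 else 0)"

definition CUT :: "('e::finite \<Rightarrow> nat set) \<Rightarrow> nat set \<Rightarrow> nat set set \<Rightarrow> (real ^ 'e) set" where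
  "CUT ed V E = convex hull (cut_vec ed E ` Pow V)"

definition skel_adj :: "'a::euclidean_space set \<Rightarrow> 'a \<Rightarrow> 'a \<Rightarrow> bool" where
  "skel_adj P x y \<longleftrightarrow> x \<noteq> y \<and>
     (\<exists>F. F face_of P \<and> aff_dim F = 1 \<and> {v. v extreme_point_of F} = {x, y})"

definition hamming :: "real ^ 'e::finite \<Rightarrow> real ^ 'e \<Rightarrow> nat" where
  "hamming x y = card {k. x $ k \<noteq> y $ k}"

end

theory Submission
  imports Defs
begin

text \<open>Reindexing coordinates by the edges of the cycle, the cut vectors of C_n are exactly the
  0/1 vectors of even weight: the cut of X consists of the positions where membership in X
  changes along the cycle, and going once around changes membership an even number of times;
  conversely every even set of positions arises. So CUT(C_n) is the demicube, the convex hull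
  of the even-weight vertices of the unit cube. Two such vertices u, v with Hamming distance 2
  span an edge exposed by the linear functional that is +1 where both are 1, -1 where both
  are 0, and 0 on the two positions where they differ. If they differ in at least four
  positions, flipping two of them in both u and v gives another pair of vertices with the same
  midpoint, so no face has exactly u and v as its vertices. The vertices 0 and e_k + e_l for a
  fixed k are pairwise at distance 2, which yields a clique of size |E|.\<close>

section \<open>The demicube\<close>

definition char_vec :: "'e::finite set \<Rightarrow> real^'e" where
  "char_vec A = (\<chi> k. if k \<in> A then 1 else 0)"

definition demicube :: "(real^'e::finite) set" where
  "demicube = convex hull (char_vec ` {A. even (card A)})"

lemma char_vec_eq_iff [simp]: "char_vec A = char_vec B \<longleftrightarrow> A = B"
  by (auto simp: char_vec_def vec_eq_iff split: if_splits)

lemma inj_char_vec: "inj char_vec"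
  by (simp add: inj_def)

lemma char_vec_in_demicube: "even (card A) \<Longrightarrow> char_vec A \<in> demicube"
  unfolding demicube_def by (rule hull_inc) simp

lemma demicube_subset_unit_cube: "demicube \<subseteq> cbox 0 1"
  unfolding demicube_def by (rule hull_minimal) (auto simp: mem_box_cart char_vec_def)

lemma hamming_char_vec: "hamming (char_vec A) (char_vec B) = card (A \<union> B - A \<inter> B)"
proof -
  have "{k. char_vec A $ k \<noteq> char_vec B $ k} = A \<union> B - A \<inter> B"
    by (auto simp: char_vec_def)
  then show ?thesis by (simp add: hamming_def)
qed

lemma inner_char_vec: "a \<bullet> char_vec C = (\<Sum>k\<in>C. a $ k)"
  by (simp add: inner_vec_def char_vec_def if_distrib sum.If_cases)

lemma convex_comb_unit_interval_vertex:
  fixes a b u :: real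
  assumes "0 \<le> a" "a \<le> 1" "0 \<le> b" "b \<le> 1" "0 < u" "u < 1"
    and "c = 0 \<or> c = 1" "c = (1 - u) * a + u * b"
  shows "a = b"
proof -
  have nonneg: "0 \<le> (1 - u) * a" "0 \<le> u * b" "0 \<le> (1 - u) * (1 - a)" "0 \<le> u * (1 - b)"
    using assms(1-6) by simp_all
  have "(1 - u) * (1 - a) + u * (1 - b) = 1 - c"
    using assms(8) by (simp add: algebra_simps)
  with assms(7,8) nonneg consider
      "(1 - u) * a = 0" "u * b = 0" | "(1 - u) * (1 - a) = 0" "u * (1 - b) = 0"
    by linarith
  then show ?thesis using assms(5,6) by cases auto
qed

lemma char_vec_extreme_point_of:
  assumes "S \<subseteq> cbox 0 1" and "char_vec A \<in> S"
  shows "char_vec A extreme_point_of S"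
  unfolding extreme_point_of_def
proof (intro conjI ballI notI)
  fix a b assume ab: "a \<in> S" "b \<in> S" and "char_vec A \<in> open_segment a b"
  then obtain u where u: "a \<noteq> b" "0 < u" "u < 1" "char_vec A = (1 - u) *\<^sub>R a + u *\<^sub>R b"
    by (auto simp: in_segment)
  have "a $ k = b $ k" for k
  proof (rule convex_comb_unit_interval_vertex)
    show "char_vec A $ k = 0 \<or> char_vec A $ k = 1" by (simp add: char_vec_def)
    show "char_vec A $ k = (1 - u) * a $ k + u * b $ k" using u(4) by simp
  qed (use u ab assms(1) in \<open>auto simp: mem_box_cart subset_iff\<close>)
  with u(1) show False by (simp add: vec_eq_iff)
qed (fact assms(2))

lemma extreme_point_of_demicube: "even (card A) \<Longrightarrow> char_vec A extreme_point_of demicube"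
  by (intro char_vec_extreme_point_of demicube_subset_unit_cube char_vec_in_demicube)

lemma card_symdiff_add:
  assumes "finite A" "finite B"
  shows "card (A \<union> B - A \<inter> B) + 2 * card (A \<inter> B) = card A + card B"
proof -
  have "card (A \<union> B - A \<inter> B) = card (A \<union> B) - card (A \<inter> B)"
    using assms by (intro card_Diff_subset) auto
  moreover have "card (A \<union> B) + card (A \<inter> B) = card A + card B"
    using assms by (rule card_Un_Int[symmetric])
  moreover have "card (A \<inter> B) \<le> card (A \<union> B)"
    using assms by (intro card_mono) auto
  ultimately show ?thesis by linarith
qed

lemma even_card_symdiff:
  assumes "finite A" "finite B" "even (card A)" "even (card B)"
  shows "even (card (A \<union> B - A \<inter> B))"
  using card_symdiff_add[OF assms(1,2)] assms(3,4) by presburger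

lemma skel_adj_midpoint:
  assumes adj: "skel_adj P x y" and zw: "z \<in> P" "w \<in> P" "z \<noteq> w"
    and mid: "midpoint z w = midpoint x y" and ext: "z extreme_point_of P"
  shows "z = x \<or> z = y"
proof -
  obtain F where F: "F face_of P" and extF: "{v. v extreme_point_of F} = {x, y}"
    using adj unfolding skel_adj_def by blast
  have "x \<in> F" "y \<in> F" using extF unfolding extreme_point_of_def by auto
  then have "midpoint z w \<in> F"
    unfolding mid using face_of_imp_convex[OF F]
    by (meson closed_segment_subset midpoint_in_closed_segment subsetD)
  then have "z \<in> F"
    using F zw unfolding face_of_def by (meson midpoint_in_open_segment)
  then have "z extreme_point_of F" using extreme_point_of_face[OF F] ext by blast
  then show ?thesis using extF by blast
qed

lemma skel_adj_convex_hull_exposed_pair: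
  fixes S :: "'a::euclidean_space set"
  assumes "finite S" and le: "\<And>s. s \<in> S \<Longrightarrow> a \<bullet> s \<le> M"
    and eq: "{s \<in> S. a \<bullet> s = M} = {x, y}" and "x \<noteq> y"
  shows "skel_adj (convex hull S) x y"
proof -
  define F where "F = convex hull S \<inter> {z. a \<bullet> z = M}"
  have "convex hull S \<subseteq> {z. a \<bullet> z \<le> M}"
    using le by (intro hull_minimal) (auto simp: convex_halfspace_le)
  then have face: "F face_of convex hull S"
    unfolding F_def by (intro face_of_Int_supporting_hyperplane_le) auto
  obtain S' where S': "S' \<subseteq> S" "F = convex hull S'"
    using face_of_convex_hull_subset[OF finite_imp_compact[OF \<open>finite S\<close>] face] by blast
  have "S' \<subseteq> {s \<in> S. a \<bullet> s = M}"
    using S' hull_inc unfolding F_def by fastforce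
  then have "F \<subseteq> convex hull {x, y}" using S'(2) eq hull_mono by metis
  moreover have "convex hull {x, y} \<subseteq> F"
    using eq face_of_imp_convex[OF face] hull_inc[of _ S]
    by (intro hull_minimal) (auto simp: F_def)
  ultimately have F: "F = convex hull {x, y}" by blast
  show ?thesis
    unfolding skel_adj_def using face \<open>x \<noteq> y\<close>
    by (intro conjI exI[of _ F]) (auto simp: F extreme_point_of_convex_hull_2 aff_dim_convex_hull)
qed

lemma skel_adj_demicube_imp_card_symdiff:
  fixes A B :: "'e::finite set"
  assumes eA: "even (card A)" and eB: "even (card B)"
    and adj: "skel_adj demicube (char_vec A) (char_vec B)"
  shows "card (A \<union> B - A \<inter> B) = 2"
proof (rule ccontr)
  define D where "D = A \<union> B - A \<inter> B"
  assume "card D \<noteq> 2"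
  moreover have "card D \<noteq> 0" using adj unfolding D_def skel_adj_def by auto
  moreover have "even (card D)" unfolding D_def using eA eB by (simp add: even_card_symdiff)
  ultimately have "3 \<le> card D" by presburger
  then obtain T where "T \<subseteq> D" "card T = 3" by (meson obtain_subset_with_card_n)
  then obtain i j l where ijl: "i \<in> D" "j \<in> D" "l \<in> D" "i \<noteq> j" "l \<noteq> i" "l \<noteq> j"
    by (auto simp: card_3_iff)
  define Z where "Z = A \<union> {i, j} - A \<inter> {i, j}"
  define W where "W = B \<union> {i, j} - B \<inter> {i, j}"
  have coords: "char_vec Z $ k + char_vec W $ k = char_vec A $ k + char_vec B $ k" for k
    using ijl unfolding Z_def W_def D_def char_vec_def by auto
  have "even (card Z)" unfolding Z_def by (rule even_card_symdiff) (use eA ijl in simp_all)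
  moreover have "even (card W)" unfolding W_def by (rule even_card_symdiff) (use eB ijl in simp_all)
  moreover have "midpoint (char_vec Z) (char_vec W) = midpoint (char_vec A) (char_vec B)"
    unfolding midpoint_def using coords by (metis vec_eq_iff vector_add_component)
  moreover have "Z \<noteq> W" using ijl unfolding Z_def W_def D_def by auto
  ultimately have "char_vec Z = char_vec A \<or> char_vec Z = char_vec B"
    using skel_adj_midpoint[OF adj, of "char_vec Z" "char_vec W"]
    by (simp add: char_vec_in_demicube extreme_point_of_demicube)
  then have "Z = A \<or> Z = B" by simp
  moreover have "i \<in> Z \<longleftrightarrow> i \<notin> A" "l \<in> Z \<longleftrightarrow> l \<notin> B"
    using ijl unfolding Z_def D_def by auto
  ultimately show False by blast
qed

lemma even_between_inter_union:
  fixes A B C :: "'e::finite set"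
  assumes "card (A \<union> B - A \<inter> B) = 2" and "even (card A)" "even (card C)"
    and "A \<inter> B \<subseteq> C" "C \<subseteq> A \<union> B"
  shows "C = A \<or> C = B"
proof -
  define D where "D = A \<union> B - A \<inter> B"
  obtain i j where D: "D = {i, j}" "i \<noteq> j"
    using assms(1) unfolding D_def[symmetric] card_2_iff by blast
  have split: "card X = card (A \<inter> B) + card (X \<inter> D)" if "A \<inter> B \<subseteq> X" "X \<subseteq> A \<union> B" for X
  proof -
    have "X = A \<inter> B \<union> X \<inter> D" "A \<inter> B \<inter> (X \<inter> D) = {}" using that unfolding D_def by blast+
    then show ?thesis by (metis card_Un_disjoint finite)
  qed
  have parity: "even (card (C \<inter> D) + card (A \<inter> D))"
    using split[of A] split[of C] assms(2-5) by auto
  have sub: "X = {} \<or> X = {i} \<or> X = {j} \<or> X = {i, j}" if "X \<subseteq> D" for X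
    using that D by blast
  have "C \<inter> D = A \<inter> D \<or> C \<inter> D = D - A \<inter> D"
    using sub[OF Int_lower2, of C] sub[OF Int_lower2, of A] parity D(2) unfolding D(1)
    by (elim disjE) (simp_all add: insert_Diff_if)
  moreover have "B \<inter> D = D - A \<inter> D" unfolding D_def by blast
  ultimately have "C \<inter> D = A \<inter> D \<or> C \<inter> D = B \<inter> D" by simp
  then show ?thesis using assms(4,5) unfolding D_def by blast
qed

lemma card_symdiff_2_imp_skel_adj_demicube:
  fixes A B :: "'e::finite set"
  assumes eA: "even (card A)" and eB: "even (card B)"
    and D2: "card (A \<union> B - A \<inter> B) = 2"
  shows "skel_adj demicube (char_vec A) (char_vec B)"
proof -
  define a :: "real^'e" where "a = (\<chi> k. of_bool (k \<in> A \<inter> B) - of_bool (k \<notin> A \<union> B))"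
  define M where "M = real (card (A \<inter> B))"
  have val: "a \<bullet> char_vec C = real (card (C \<inter> (A \<inter> B))) - real (card (C - (A \<union> B)))" for C
  proof -
    have "a \<bullet> char_vec C = (\<Sum>k\<in>C. of_bool (k \<in> A \<inter> B)) - (\<Sum>k\<in>C. of_bool (k \<notin> A \<union> B))"
      unfolding inner_char_vec a_def by (simp add: sum_subtractf)
    also have "\<dots> = real (card (C \<inter> (A \<inter> B))) - real (card (C - (A \<union> B)))"
      by (simp add: sum_of_bool_eq Int_def set_diff_eq)
    finally show ?thesis .
  qed
  have bound: "card (C \<inter> (A \<inter> B)) \<le> card (A \<inter> B)" for C :: "'e set"
    by (intro card_mono) auto
  have le: "a \<bullet> char_vec C \<le> M" for C
    using bound[of C] unfolding val M_def by simp
  have tight: "a \<bullet> char_vec C = M \<longleftrightarrow> A \<inter> B \<subseteq> C \<and> C \<subseteq> A \<union> B" for C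
  proof -
    have "a \<bullet> char_vec C = M \<longleftrightarrow> card (C \<inter> (A \<inter> B)) = card (A \<inter> B) \<and> card (C - (A \<union> B)) = 0"
      using bound[of C] unfolding val M_def by linarith
    also have "\<dots> \<longleftrightarrow> A \<inter> B \<subseteq> C \<and> C \<subseteq> A \<union> B"
      using card_subset_eq[of "A \<inter> B" "C \<inter> (A \<inter> B)"] by (auto simp: inf.absorb2)
    finally show ?thesis .
  qed
  have "a \<bullet> char_vec C = M \<longleftrightarrow> C = A \<or> C = B" if "even (card C)" for C
    using tight[of C] even_between_inter_union[OF D2 eA that] by blast
  then have "{s \<in> char_vec ` {C. even (card C)}. a \<bullet> s = M} = {char_vec A, char_vec B}"
    using eA eB by auto
  moreover have "A \<noteq> B" using D2 by auto
  ultimately show ?thesis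
    unfolding demicube_def using le by (intro skel_adj_convex_hull_exposed_pair) auto
qed

lemma skel_adj_demicube_iff:
  fixes A B :: "'e::finite set"
  assumes "even (card A)" "even (card B)"
  shows "skel_adj demicube (char_vec A) (char_vec B) \<longleftrightarrow> card (A \<union> B - A \<inter> B) = 2"
  using assms skel_adj_demicube_imp_card_symdiff card_symdiff_2_imp_skel_adj_demicube by blast

lemma demicube_star_clique:
  fixes k0 :: "'e::finite"
  defines "K \<equiv> char_vec ` range (\<lambda>k. {k0} \<union> {k} - {k0} \<inter> {k})"
  shows "K \<subseteq> {x. x extreme_point_of demicube}" and "card K = CARD('e)"
    and "\<forall>x\<in>K. \<forall>y\<in>K. x \<noteq> y \<longrightarrow> skel_adj demicube x y"
proof -
  define f where "f k = {k0} \<union> {k} - {k0} \<inter> {k}" for k :: 'e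
  have K: "K = char_vec ` range f" unfolding K_def f_def ..
  have even: "even (card (f k))" for k
    unfolding f_def by (cases "k = k0") auto
  have symdiff: "f k \<union> f l - f k \<inter> f l = {k, l}" if "k \<noteq> l" for k l
    using that unfolding f_def by auto
  have "inj f"
  proof (rule injI, rule ccontr)
    fix k l assume "f k = f l" "k \<noteq> l"
    then show False using symdiff[of k l] by auto
  qed
  show "K \<subseteq> {x. x extreme_point_of demicube}"
    unfolding K using even extreme_point_of_demicube by auto
  have "card K = card (range f)"
    unfolding K by (intro card_image inj_on_subset[OF inj_char_vec]) simp
  also have "\<dots> = CARD('e)" using \<open>inj f\<close> by (simp add: card_image)
  finally show "card K = CARD('e)" .
  show "\<forall>x\<in>K. \<forall>y\<in>K. x \<noteq> y \<longrightarrow> skel_adj demicube x y"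
  proof (intro ballI impI)
    fix x y assume "x \<in> K" "y \<in> K" "x \<noteq> y"
    then obtain k l where "x = char_vec (f k)" "y = char_vec (f l)" "k \<noteq> l"
      unfolding K by auto
    then show "skel_adj demicube x y"
      using skel_adj_demicube_iff[OF even even] symdiff by simp
  qed
qed

section \<open>Cut vectors under a labelling of the edges\<close>

lemma card_doubleton_Int_eq_1:
  "a \<noteq> b \<Longrightarrow> card ({a, b} \<inter> S) = 1 \<longleftrightarrow> (a \<in> S) \<noteq> (b \<in> S)"
  by (cases "a \<in> S"; cases "b \<in> S") auto

lemma delta_symdiff:
  assumes "\<forall>e\<in>E. card e = 2"
  shows "delta E (X \<union> Y - X \<inter> Y) = delta E X \<union> delta E Y - delta E X \<inter> delta E Y"
proof -
  have "card (e \<inter> (X \<union> Y - X \<inter> Y)) = 1 \<longleftrightarrow> (card (e \<inter> X) = 1) \<noteq> (card (e \<inter> Y) = 1)"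
    if "e \<in> E" for e
  proof -
    have "card e = 2" using assms that by blast
    then obtain a b where e: "e = {a, b}" and "a \<noteq> b" by (meson card_2_iff)
    show ?thesis unfolding e card_doubleton_Int_eq_1[OF \<open>a \<noteq> b\<close>] by auto
  qed
  then show ?thesis unfolding delta_def by auto
qed

lemma delta_subset: "delta E S \<subseteq> E"
  by (auto simp: delta_def)

lemma cut_vec_eq_char_vec: "cut_vec ed E S = char_vec (ed -` delta E S)"
  by (simp add: cut_vec_def char_vec_def)

lemma card_vimage_bij:
  assumes "bij_betw f UNIV E" "D \<subseteq> E"
  shows "card (f -` D) = card D"
  using assms by (intro card_vimage_inj) (auto simp: bij_betw_def)

lemma vimage_even_subsets:
  fixes f :: "'e::finite \<Rightarrow> 'a"
  assumes f: "bij_betw f UNIV E"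
  shows "(\<lambda>D. f -` D) ` {D. D \<subseteq> E \<and> even (card D)} = {B. even (card B)}"
proof (intro equalityI subsetI)
  fix B :: "'e set" assume "B \<in> {B. even (card B)}"
  moreover have "card (f ` B) = card B"
    using bij_betw_imp_inj_on[OF f] by (simp add: card_image inj_on_subset)
  moreover have "f -` f ` B = B" using f by (simp add: bij_betw_def inj_vimage_image_eq)
  ultimately show "B \<in> (\<lambda>D. f -` D) ` {D. D \<subseteq> E \<and> even (card D)}"
    using f by (auto simp: bij_betw_def intro!: image_eqI[of B _ "f ` B"])
next
  fix B assume "B \<in> (\<lambda>D. f -` D) ` {D. D \<subseteq> E \<and> even (card D)}"
  then show "B \<in> {B. even (card B)}" using card_vimage_bij[OF f] by auto
qed

lemma card_delta_symdiff_vimage: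
  assumes "bij_betw ed UNIV E" and "\<forall>e\<in>E. card e = 2"
  shows "card (delta E (X \<union> Y - X \<inter> Y))
    = card (ed -` delta E X \<union> ed -` delta E Y - ed -` delta E X \<inter> ed -` delta E Y)"
proof -
  have "ed -` delta E X \<union> ed -` delta E Y - ed -` delta E X \<inter> ed -` delta E Y
      = ed -` delta E (X \<union> Y - X \<inter> Y)"
    unfolding delta_symdiff[OF assms(2)] by auto
  then show ?thesis using card_vimage_bij[OF assms(1) delta_subset] by simp
qed

lemma CUT_eq_demicube:
  assumes "bij_betw ed UNIV E" and "delta E ` Pow V = {D. D \<subseteq> E \<and> even (card D)}"
  shows "CUT ed V E = demicube"
proof -
  have "cut_vec ed E ` Pow V = char_vec ` (\<lambda>D. ed -` D) ` delta E ` Pow V"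
    by (simp add: cut_vec_eq_char_vec image_image)
  then show ?thesis
    unfolding CUT_def demicube_def assms(2) vimage_even_subsets[OF assms(1)] by simp
qed

section \<open>Cuts of the cycle\<close>

definition cycle_edge :: "nat \<Rightarrow> nat \<Rightarrow> nat set" where
  "cycle_edge n i = {i, Suc i mod n}"

definition cut_positions :: "nat \<Rightarrow> nat set \<Rightarrow> nat set" where
  "cut_positions n X = {i. i < n \<and> (i \<in> X) \<noteq> (Suc i mod n \<in> X)}"

lemma cut_positions_subset: "cut_positions n X \<subseteq> {..<n}"
  by (auto simp: cut_positions_def)

lemma cycle_edges_eq_image: "cycle_edges n = cycle_edge n ` {..<n}"
  by (auto simp: cycle_edges_def cycle_edge_def)

lemma Suc_mod_neq: "2 \<le> n \<Longrightarrow> i < n \<Longrightarrow> Suc i mod n \<noteq> i"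
  by (cases "Suc i = n") auto

lemma card_cycle_edges: "2 \<le> n \<Longrightarrow> e \<in> cycle_edges n \<Longrightarrow> card e = 2"
  by (auto simp: cycle_edges_def dest: Suc_mod_neq)

lemma inj_on_cycle_edge: "3 \<le> n \<Longrightarrow> inj_on (cycle_edge n) {..<n}"
  by (auto simp: inj_on_def cycle_edge_def doubleton_eq_iff mod_Suc split: if_splits)

lemma delta_cycle:
  assumes "2 \<le> n"
  shows "delta (cycle_edges n) X = cycle_edge n ` cut_positions n X"
proof -
  have "card (cycle_edge n i \<inter> X) = 1 \<longleftrightarrow> i \<in> cut_positions n X" if "i < n" for i
    using that Suc_mod_neq[OF assms that] card_doubleton_Int_eq_1[of i "Suc i mod n" X]
    by (auto simp: cycle_edge_def cut_positions_def)
  then show ?thesis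
    unfolding delta_def cycle_edges_eq_image using cut_positions_subset by blast
qed

lemma even_card_changes:
  fixes g :: "nat \<Rightarrow> bool"
  shows "even (card {i. i < m \<and> g i \<noteq> g (Suc i)}) \<longleftrightarrow> g 0 = g m"
proof (induction m)
  case (Suc m)
  have "{i. i < Suc m \<and> g i \<noteq> g (Suc i)} =
      {i. i < m \<and> g i \<noteq> g (Suc i)} \<union> (if g m \<noteq> g (Suc m) then {m} else {})"
    by (auto simp: less_Suc_eq)
  with Suc.IH show ?case by (cases "g m = g (Suc m)") auto
qed simp

lemma even_card_cut_positions: "even (card (cut_positions n X))"
proof -
  have "cut_positions n X = {i. i < n \<and> (i mod n \<in> X) \<noteq> (Suc i mod n \<in> X)}"
    by (auto simp: cut_positions_def)
  then show ?thesis using even_card_changes[of n "\<lambda>i. i mod n \<in> X"] by simp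
qed

lemma cut_positions_odd_prefix:
  assumes I: "I \<subseteq> {..<n}" and "even (card I)"
  shows "cut_positions n {v. v < n \<and> odd (card {k \<in> I. k < v})} = I"
proof -
  define c where "c v = card {k \<in> I. k < v}" for v
  have c_Suc: "c (Suc v) = c v + (if v \<in> I then 1 else 0)" for v
  proof -
    have "{k \<in> I. k < Suc v} = {k \<in> I. k < v} \<union> (if v \<in> I then {v} else {})"
      by (auto simp: less_Suc_eq)
    then show ?thesis unfolding c_def by auto
  qed
  have "{k \<in> I. k < n} = I" using I by auto
  then have c_n: "even (c n)" using assms(2) by (simp add: c_def)
  have "i \<in> cut_positions n {v. v < n \<and> odd (c v)} \<longleftrightarrow> i \<in> I" if "i < n" for i
  proof (cases "Suc i = n")
    case True
    then show ?thesis using c_n c_Suc[of i] by (auto simp: cut_positions_def c_def[of 0])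
  next
    case False
    then show ?thesis using \<open>i < n\<close> c_Suc[of i] by (auto simp: cut_positions_def)
  qed
  then have "cut_positions n {v. v < n \<and> odd (c v)} = I" using I cut_positions_subset by blast
  then show ?thesis unfolding c_def by blast
qed

lemma cuts_of_cycle:
  assumes "3 \<le> n"
  shows "delta (cycle_edges n) ` Pow (cycle_vertices n) = {D. D \<subseteq> cycle_edges n \<and> even (card D)}"
proof (intro equalityI subsetI)
  have inj: "inj_on (cycle_edge n) {..<n}" using inj_on_cycle_edge[OF assms] .
  have card_delta: "card (delta (cycle_edges n) X) = card (cut_positions n X)" for X
    using assms inj_on_subset[OF inj cut_positions_subset]
    by (simp add: delta_cycle card_image)
  fix D assume "D \<in> delta (cycle_edges n) ` Pow (cycle_vertices n)"
  then show "D \<in> {D. D \<subseteq> cycle_edges n \<and> even (card D)}"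
    using card_delta even_card_cut_positions by (auto simp: delta_def)
next
  fix D assume D: "D \<in> {D. D \<subseteq> cycle_edges n \<and> even (card D)}"
  define I where "I = {i. i < n \<and> cycle_edge n i \<in> D}"
  have DI: "D = cycle_edge n ` I"
    using D unfolding I_def cycle_edges_eq_image by auto
  have "card I = card D"
    unfolding DI using inj_on_subset[OF inj_on_cycle_edge[OF assms]]
    by (simp add: card_image I_def subset_iff)
  define X where "X = {v. v < n \<and> odd (card {k \<in> I. k < v})}"
  have "cut_positions n X = I"
    unfolding X_def using D \<open>card I = card D\<close> by (intro cut_positions_odd_prefix) (auto simp: I_def)
  then have "delta (cycle_edges n) X = D"
    using assms by (simp add: delta_cycle DI)
  moreover have "X \<in> Pow (cycle_vertices n)" by (auto simp: X_def cycle_vertices_def)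
  ultimately show "D \<in> delta (cycle_edges n) ` Pow (cycle_vertices n)" by blast
qed

theorem mainTheorem7:
  fixes n :: nat and ed :: "'e::finite \<Rightarrow> nat set"
  assumes "n \<ge> 3"
    and "bij_betw ed UNIV (cycle_edges n)"
  shows "(\<forall>X Y. X \<subseteq> cycle_vertices n \<longrightarrow> Y \<subseteq> cycle_vertices n \<longrightarrow>
             cut_vec ed (cycle_edges n) X \<noteq> cut_vec ed (cycle_edges n) Y \<longrightarrow>
             (skel_adj (CUT ed (cycle_vertices n) (cycle_edges n))
                (cut_vec ed (cycle_edges n) X) (cut_vec ed (cycle_edges n) Y)
              \<longleftrightarrow> card (delta (cycle_edges n) (X \<union> Y - X \<inter> Y)) = 2)
           \<and> (card (delta (cycle_edges n) (X \<union> Y - X \<inter> Y)) = 2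
              \<longleftrightarrow> hamming (cut_vec ed (cycle_edges n) X) (cut_vec ed (cycle_edges n) Y) = 2))
       \<and> (\<exists>K. K \<subseteq> {x. x extreme_point_of CUT ed (cycle_vertices n) (cycle_edges n)}
             \<and> card K = card (cycle_edges n)
             \<and> (\<forall>x\<in>K. \<forall>y\<in>K. x \<noteq> y \<longrightarrow>
                   skel_adj (CUT ed (cycle_vertices n) (cycle_edges n)) x y))"
proof -
  let ?V = "cycle_vertices n"
  let ?E = "cycle_edges n"
  define cut_set where "cut_set X = ed -` delta ?E X" for X
  have cuts: "delta ?E ` Pow ?V = {D. D \<subseteq> ?E \<and> even (card D)}"
    using assms(1) by (rule cuts_of_cycle)
  have CUT: "CUT ed ?V ?E = demicube"
    using assms(2) cuts by (rule CUT_eq_demicube)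
  have cut_vec: "cut_vec ed ?E X = char_vec (cut_set X)" for X
    unfolding cut_set_def by (rule cut_vec_eq_char_vec)
  have even: "even (card (cut_set X))" if "X \<subseteq> ?V" for X
  proof -
    have "delta ?E X \<in> delta ?E ` Pow ?V" using that by blast
    then show ?thesis using cuts card_vimage_bij[OF assms(2) delta_subset] by (simp add: cut_set_def)
  qed
  have card_delta: "card (delta ?E (X \<union> Y - X \<inter> Y))
      = card (cut_set X \<union> cut_set Y - cut_set X \<inter> cut_set Y)" for X Y
    unfolding cut_set_def using assms card_cycle_edges[of n]
    by (intro card_delta_symdiff_vimage) simp_all
  have card_E: "card ?E = CARD('e)" using bij_betw_same_card[OF assms(2)] by simp
  show ?thesis
  proof (intro conjI allI impI)
    fix X Y assume "X \<subseteq> ?V" "Y \<subseteq> ?V"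
    then show "skel_adj (CUT ed ?V ?E) (cut_vec ed ?E X) (cut_vec ed ?E Y)
        \<longleftrightarrow> card (delta ?E (X \<union> Y - X \<inter> Y)) = 2"
      unfolding CUT cut_vec card_delta by (intro skel_adj_demicube_iff even)
    show "card (delta ?E (X \<union> Y - X \<inter> Y)) = 2
        \<longleftrightarrow> hamming (cut_vec ed ?E X) (cut_vec ed ?E Y) = 2"
      unfolding cut_vec card_delta hamming_char_vec ..
  next
    show "\<exists>K. K \<subseteq> {x. x extreme_point_of CUT ed ?V ?E} \<and> card K = card ?E
        \<and> (\<forall>x\<in>K. \<forall>y\<in>K. x \<noteq> y \<longrightarrow> skel_adj (CUT ed ?V ?E) x y)"
      unfolding CUT card_E using demicube_star_clique[of undefined] by blast
  qed
qed

end
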